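(* Let $m\ge 2$ and $a_1,a_2$ integers coprime to $m$, and let $G=\langle x_1,x_2\mid c_{12}^m,\ \overline{c_{12}^{(x_1)}}\,c_{12}^{a_1},\ \overline{c_{12}^{(x_2)}}\,c_{12}^{a_2}\rangle$, whose commutator subgroup is cyclic of order $m$ generated by $c_{12}$. Then an element $z=x_1^{n_1}x_2^{n_2}c_{12}^{n_c}$ ($n_1,n_2,n_c\in\mathbb Z$) lies in the center of $G$ if and only if $$n_c(a_1-1)\equiv S_{n_2}(a_2)\pmod m,\qquad n_c(a_2-1)\equiv S_{-n_1}(a_1)\pmod m.$$
   Context: Notation: $\bar g=g^{-1}$, $c_{gh}=\bar g\,\bar h\,g\,h$, $c^{(g)}=\bar g\,c\,g$, $c_{12}=c_{x_1x_2}$. For an integer $a$ coprime to $m$, $a^{-1}$ denotes its inverse modulo $m$, and $S_n(a)=(a^n-1)/(a-1)$ understood modulo $m$ as $S_n(a)=\sum_{s=0}^{n-1}a^s$ for $n\ge0$ and $S_n(a)=-\sum_{s=1}^{|n|}a^{-s}$ for $n<0$ (so $S_n(1)=n$). *)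

theory Defs
  imports "HOL-Algebra.Algebra" "HOL-Number_Theory.Number_Theory"
begin

definition comm :: "('a, 'b) monoid_scheme \<Rightarrow> 'a \<Rightarrow> 'a \<Rightarrow> 'a" where
  "comm G g h = inv\<^bsub>G\<^esub> g \<otimes>\<^bsub>G\<^esub> inv\<^bsub>G\<^esub> h \<otimes>\<^bsub>G\<^esub> g \<otimes>\<^bsub>G\<^esub> h"

definition conjg :: "('a, 'b) monoid_scheme \<Rightarrow> 'a \<Rightarrow> 'a \<Rightarrow> 'a" where
  "conjg G c g = inv\<^bsub>G\<^esub> g \<otimes>\<^bsub>G\<^esub> c \<otimes>\<^bsub>G\<^esub> g"

definition rels :: "('a, 'b) monoid_scheme \<Rightarrow> int \<Rightarrow> int \<Rightarrow> int \<Rightarrow> 'a \<Rightarrow> 'a \<Rightarrow> bool" where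
  "rels H m a1 a2 y1 y2 \<longleftrightarrow>
     comm H y1 y2 [^]\<^bsub>H\<^esub> m = \<one>\<^bsub>H\<^esub> \<and>
     inv\<^bsub>H\<^esub> (conjg H (comm H y1 y2) y1) \<otimes>\<^bsub>H\<^esub> (comm H y1 y2 [^]\<^bsub>H\<^esub> a1) = \<one>\<^bsub>H\<^esub> \<and>
     inv\<^bsub>H\<^esub> (conjg H (comm H y1 y2) y2) \<otimes>\<^bsub>H\<^esub> (comm H y1 y2 [^]\<^bsub>H\<^esub> a2) = \<one>\<^bsub>H\<^esub>"

(* G is the group presented by <x1, x2 | relators>, with generators x1, x2:
   generated by x1, x2, the relators hold, and the universal property holds
   (for target groups on a countably infinite carrier type, which suffices since
   the presented group is countable). *)
definition presentation ::
  "('a, 'b) monoid_scheme \<Rightarrow> int \<Rightarrow> int \<Rightarrow> int \<Rightarrow> 'a \<Rightarrow> 'a \<Rightarrow> bool" where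
  "presentation G m a1 a2 x1 x2 \<longleftrightarrow>
     group G \<and> x1 \<in> carrier G \<and> x2 \<in> carrier G \<and>
     carrier G = generate G {x1, x2} \<and>
     rels G m a1 a2 x1 x2 \<and>
     (\<forall>(H :: int monoid) y1 y2. group H \<and> y1 \<in> carrier H \<and> y2 \<in> carrier H \<and>
        rels H m a1 a2 y1 y2 \<longrightarrow>
        (\<exists>\<phi> \<in> hom G H. \<phi> x1 = y1 \<and> \<phi> x2 = y2))"

definition group_center :: "('a, 'b) monoid_scheme \<Rightarrow> 'a set" where
  "group_center G = {z \<in> carrier G. \<forall>g \<in> carrier G. z \<otimes>\<^bsub>G\<^esub> g = g \<otimes>\<^bsub>G\<^esub> z}"

definition Ssum :: "int \<Rightarrow> int \<Rightarrow> int \<Rightarrow> int" where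
  "Ssum m a n = (if n \<ge> 0 then (\<Sum>s<nat n. a ^ s)
                 else - (\<Sum>s\<in>{1..nat (-n)}. (modular_inverse m a) ^ s))"

end

theory Submission
  imports Defs "HOL-Library.Countable"
begin

(* Write c = c12. Conjugation by x_i acts on the cyclic group generated by c as c -> c^(a_i),
   which gives the commutation rules c^k x_i^n = x_i^n c^(k a_i^n), x1^n x2 = x2 x1^n c^(S_n(a1))
   and x2^n x1 = x1 x2^n c^(-S_n(a2)).  Hence z = x1^n1 x2^n2 c^nc commutes with x1 iff
   c^(nc (a1 - 1)) = c^(S_n2(a2)), and with x2 iff c^(S_n1(a1) a2^n2 + nc (a2 - 1)) = 1, and z is
   central iff it commutes with both generators.  These are congruences mod m because c has order
   exactly m: the triples (p, n, k) in Z x Z x Z/m, multiplied as the normal forms x1^p x2^n c^k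
   multiply, form a group satisfying the relations in which c has order m. *)

section \<open>Powers and geometric sums modulo m\<close>

definition zpow_mod :: "int \<Rightarrow> int \<Rightarrow> int \<Rightarrow> int" where
  "zpow_mod m a n = (if n \<ge> 0 then a ^ nat n else modular_inverse m a ^ nat (- n))"

lemma zpow_mod_0 [simp]: "zpow_mod m a 0 = 1"
  by (simp add: zpow_mod_def)

lemma zpow_mod_1 [simp]: "zpow_mod m a 1 = a"
  by (simp add: zpow_mod_def)

lemma Ssum_0 [simp]: "Ssum m a 0 = 0"
  by (simp add: Ssum_def)

lemma Ssum_1 [simp]: "Ssum m a 1 = 1"
  by (simp add: Ssum_def)

lemma Ssum_minus_1 [simp]: "Ssum m a (- 1) = - modular_inverse m a"
  by (simp add: Ssum_def)

lemma Ssum_add1: "Ssum m a (n + 1) = Ssum m a n + zpow_mod m a n"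
proof (cases "n \<ge> 0")
  case True
  then have "nat (n + 1) = Suc (nat n)" by simp
  with True show ?thesis by (simp add: Ssum_def zpow_mod_def)
next
  case False
  then have "nat (- n) = Suc (nat (- (n + 1)))" by simp
  moreover have "{1..Suc k} = insert (Suc k) {1..k}" for k :: nat by auto
  ultimately show ?thesis
    using False by (auto simp: Ssum_def zpow_mod_def)
qed

context
  fixes m a :: int
  assumes coprime: "coprime a m"
begin

lemma zpow_mod_add1: "[zpow_mod m a (n + 1) = a * zpow_mod m a n] (mod m)"
proof (cases "n \<ge> 0")
  case True
  then have "nat (n + 1) = Suc (nat n)" by simp
  with True show ?thesis by (simp add: zpow_mod_def)
next
  case False
  let ?b = "modular_inverse m a"
  have "nat (- n) = Suc (nat (- (n + 1)))" using False by simp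
  then have "a * zpow_mod m a n = (a * ?b) * zpow_mod m a (n + 1)"
    using False by (simp add: zpow_mod_def)
  also have "[\<dots> = 1 * zpow_mod m a (n + 1)] (mod m)"
    using cong_modular_inverse1[OF coprime] by (intro cong_mult cong_refl)
  finally show ?thesis by (simp add: cong_sym)
qed

lemma zpow_mod_add: "[zpow_mod m a (q + r) = zpow_mod m a q * zpow_mod m a r] (mod m)"
proof (induction r rule: int_induct[where k = 0])
  case base
  then show ?case by simp
next
  case (step1 r)
  have "[zpow_mod m a (q + (r + 1)) = a * zpow_mod m a (q + r)] (mod m)"
    using zpow_mod_add1[of "q + r"] by (simp add: add.assoc)
  also have "[a * zpow_mod m a (q + r) = a * (zpow_mod m a q * zpow_mod m a r)] (mod m)"
    using step1.IH by (rule cong_scalar_left)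
  also have "[a * (zpow_mod m a q * zpow_mod m a r) = zpow_mod m a q * zpow_mod m a (r + 1)] (mod m)"
    using cong_scalar_left[OF cong_sym[OF zpow_mod_add1[of r]], of "zpow_mod m a q"]
    by (simp add: mult.left_commute)
  finally show ?case .
next
  case (step2 r)
  have "[a * zpow_mod m a (q + (r - 1)) = zpow_mod m a (q + r)] (mod m)"
    using zpow_mod_add1[of "q + (r - 1)"] by (simp add: cong_sym add_diff_eq)
  also have "[zpow_mod m a (q + r) = zpow_mod m a q * zpow_mod m a r] (mod m)"
    by (rule step2.IH)
  also have "[zpow_mod m a q * zpow_mod m a r = a * (zpow_mod m a q * zpow_mod m a (r - 1))] (mod m)"
    using cong_scalar_left[OF zpow_mod_add1[of "r - 1"], of "zpow_mod m a q"]
    by (simp add: mult.left_commute)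
  finally show ?case
    using cong_mult_lcancel[OF coprime] by blast
qed

lemma Ssum_add: "[Ssum m a (q + r) = Ssum m a q + zpow_mod m a q * Ssum m a r] (mod m)"
proof (induction r rule: int_induct[where k = 0])
  case base
  then show ?case by simp
next
  case (step1 r)
  have "Ssum m a (q + (r + 1)) = Ssum m a (q + r) + zpow_mod m a (q + r)"
    using Ssum_add1[of m a "q + r"] by (simp add: add.assoc)
  also have "[Ssum m a (q + r) + zpow_mod m a (q + r)
      = (Ssum m a q + zpow_mod m a q * Ssum m a r) + zpow_mod m a q * zpow_mod m a r] (mod m)"
    using step1.IH zpow_mod_add by (rule cong_add)
  also have "(Ssum m a q + zpow_mod m a q * Ssum m a r) + zpow_mod m a q * zpow_mod m a r
      = Ssum m a q + zpow_mod m a q * Ssum m a (r + 1)"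
    using Ssum_add1[of m a r] by (simp add: algebra_simps)
  finally show ?case .
next
  case (step2 r)
  have "Ssum m a (q + (r - 1)) = Ssum m a (q + r) - zpow_mod m a (q + (r - 1))"
    using Ssum_add1[of m a "q + (r - 1)"] by (simp add: add_diff_eq)
  also have "[Ssum m a (q + r) - zpow_mod m a (q + (r - 1))
      = (Ssum m a q + zpow_mod m a q * Ssum m a r) - zpow_mod m a q * zpow_mod m a (r - 1)] (mod m)"
    using step2.IH zpow_mod_add by (rule cong_diff)
  also have "(Ssum m a q + zpow_mod m a q * Ssum m a r) - zpow_mod m a q * zpow_mod m a (r - 1)
      = Ssum m a q + zpow_mod m a q * Ssum m a (r - 1)"
    using Ssum_add1[of m a "r - 1"] by (simp add: algebra_simps)
  finally show ?case .
qed

lemma zpow_mod_inverse: "[zpow_mod m a n * zpow_mod m a (- n) = 1] (mod m)"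
  using zpow_mod_add[of n "- n"] by (simp add: cong_sym)

lemma Ssum_geometric: "[(a - 1) * Ssum m a n = zpow_mod m a n - 1] (mod m)"
proof -
  have "[1 + a * Ssum m a n = Ssum m a (1 + n)] (mod m)"
    using Ssum_add[of 1 n] by (simp add: cong_sym)
  also have "Ssum m a (1 + n) = Ssum m a n + zpow_mod m a n"
    using Ssum_add1[of m a n] by (simp add: add.commute)
  finally have "[1 + a * Ssum m a n - (1 + Ssum m a n) = Ssum m a n + zpow_mod m a n - (1 + Ssum m a n)] (mod m)"
    by (intro cong_diff cong_refl)
  then show ?thesis by (simp add: algebra_simps)
qed

end

lemma center_congruences_force_zpow_mod_eq:
  fixes m a1 a2 n1 n2 nc :: int
  assumes coprime1: "coprime a1 m" and coprime2: "coprime a2 m"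
    and first: "[nc * (a1 - 1) = Ssum m a2 n2] (mod m)"
    and second: "[Ssum m a1 n1 * zpow_mod m a2 n2 + nc * (a2 - 1) = 0] (mod m)
      \<or> [nc * (a2 - 1) = Ssum m a1 (- n1)] (mod m)"
  shows "[zpow_mod m a2 n2 = zpow_mod m a1 (- n1)] (mod m)"
proof -
  define u u' s s' w t where "u = zpow_mod m a1 n1" and "u' = zpow_mod m a1 (- n1)"
    and "s = Ssum m a1 n1" and "s' = Ssum m a1 (- n1)"
    and "w = zpow_mod m a2 n2" and "t = Ssum m a2 n2"
  have A: "m dvd nc * (a1 - 1) - t"
    using first by (simp add: t_def cong_iff_dvd_diff)
  have geo: "m dvd (a1 - 1) * s - (u - 1)" "m dvd (a1 - 1) * s' - (u' - 1)" "m dvd (a2 - 1) * t - (w - 1)"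
    using Ssum_geometric[OF coprime1, of n1] Ssum_geometric[OF coprime1, of "- n1"]
      Ssum_geometric[OF coprime2, of n2]
    by (simp_all add: u_def u'_def s_def s'_def w_def t_def cong_iff_dvd_diff)
  from second[folded s_def s'_def w_def] have "m dvd w - u'"
  proof
    assume "[s * w + nc * (a2 - 1) = 0] (mod m)"
    then have B: "m dvd s * w + nc * (a2 - 1)"
      by (simp add: cong_0_iff)
    have "u * w - 1 = (a1 - 1) * (s * w + nc * (a2 - 1)) - w * ((a1 - 1) * s - (u - 1))
        - (a2 - 1) * (nc * (a1 - 1) - t) - ((a2 - 1) * t - (w - 1))"
      by (simp add: algebra_simps)
    then have "m dvd u * w - 1"
      using A B geo by (metis dvd_diff dvd_mult)
    moreover have "m dvd u * u' - 1"
      using zpow_mod_inverse[OF coprime1, of n1] by (simp add: u_def u'_def cong_iff_dvd_diff)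
    moreover have "w - u' = u' * (u * w - 1) - w * (u * u' - 1)"
      by (simp add: algebra_simps)
    ultimately show ?thesis
      by (metis dvd_diff dvd_mult)
  next
    assume "[nc * (a2 - 1) = s'] (mod m)"
    then have T: "m dvd nc * (a2 - 1) - s'"
      by (simp add: cong_iff_dvd_diff)
    have "w - u' = (a1 - 1) * (nc * (a2 - 1) - s') - (a2 - 1) * (nc * (a1 - 1) - t)
        - ((a2 - 1) * t - (w - 1)) + ((a1 - 1) * s' - (u' - 1))"
      by (simp add: algebra_simps)
    then show ?thesis
      using A T geo by (metis dvd_add dvd_diff dvd_mult)
  qed
  then show ?thesis
    by (simp add: w_def u'_def cong_iff_dvd_diff)
qed

(* Modulo a2^n2 = a1^(-n1), the two forms of the second congruence agree because
   S_(-n)(a) = -a^(-n) S_n(a) (mod m). *)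
lemma center_congruences_iff:
  fixes m a1 a2 n1 n2 nc :: int
  assumes coprime1: "coprime a1 m" and coprime2: "coprime a2 m"
  shows "[nc * a1 - Ssum m a2 n2 = nc] (mod m) \<and> [Ssum m a1 n1 * zpow_mod m a2 n2 + nc * a2 = nc] (mod m)
     \<longleftrightarrow> [nc * (a1 - 1) = Ssum m a2 n2] (mod m) \<and> [nc * (a2 - 1) = Ssum m a1 (- n1)] (mod m)"
proof -
  let ?s = "Ssum m a1 n1" and ?s' = "Ssum m a1 (- n1)"
    and ?w = "zpow_mod m a2 n2" and ?u' = "zpow_mod m a1 (- n1)"
  have first: "[nc * a1 - Ssum m a2 n2 = nc] (mod m) \<longleftrightarrow> [nc * (a1 - 1) = Ssum m a2 n2] (mod m)"
    by (simp add: cong_iff_dvd_diff algebra_simps)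
  have second: "[?s * ?w + nc * a2 = nc] (mod m) \<longleftrightarrow> [?s * ?w + nc * (a2 - 1) = 0] (mod m)"
    by (simp add: cong_iff_dvd_diff algebra_simps)
  have "[?s * ?w + nc * (a2 - 1) = 0] (mod m) \<longleftrightarrow> [nc * (a2 - 1) = ?s'] (mod m)"
    if "[nc * (a1 - 1) = Ssum m a2 n2] (mod m)"
  proof -
    have "m dvd ?w - ?u'" if "[?s * ?w + nc * (a2 - 1) = 0] (mod m) \<or> [nc * (a2 - 1) = ?s'] (mod m)"
      using center_congruences_force_zpow_mod_eq[OF coprime1 coprime2 \<open>[nc * (a1 - 1) = _] (mod m)\<close> that]
      by (simp add: cong_iff_dvd_diff)
    moreover have "m dvd ?s' + ?u' * ?s"
      using cong_sym[OF Ssum_add[OF coprime1, of "- n1" n1]] by (simp add: cong_iff_dvd_diff)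
    moreover have "(?s * ?w + nc * (a2 - 1)) - (nc * (a2 - 1) - ?s') = ?s * (?w - ?u') + (?s' + ?u' * ?s)"
      by (simp add: algebra_simps)
    ultimately show ?thesis
      unfolding cong_0_iff cong_iff_dvd_diff[of "nc * (a2 - 1)"]
      by (metis dvd_add dvd_add_right_iff dvd_mult diff_add_cancel)
  qed
  then show ?thesis
    unfolding first second by blast
qed

section \<open>Commutation rules in the presented group\<close>

lemma int_induct_iff:
  fixes P :: "int \<Rightarrow> bool"
  assumes "P 0" and "\<And>n. P (n + 1) \<longleftrightarrow> P n"
  shows "P n"
proof (induction n rule: int_induct[where k = 0])
  case (step2 i)
  then show ?case using assms(2)[of "i - 1"] by simp
qed (use assms in auto)

context group
begin

lemma m_inv_cancel_left: "x \<in> carrier G \<Longrightarrow> y \<in> carrier G \<Longrightarrow> x \<otimes> (inv x \<otimes> y) = y"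
  by (simp add: m_assoc[symmetric])

lemma int_pow_left_commute_self:
  assumes "x \<in> carrier G" and "y \<in> carrier G"
  shows "x [^] (n::int) \<otimes> (x \<otimes> y) = x \<otimes> (x [^] n \<otimes> y)"
proof -
  have "x [^] n \<otimes> x = x \<otimes> x [^] n"
    using int_pow_mult[OF assms(1), of n 1] int_pow_mult[OF assms(1), of 1 n] assms(1)
    by (simp add: add.commute)
  then show ?thesis
    using assms by (simp add: m_assoc[symmetric])
qed

lemma int_pow_eq_if_cong:
  assumes "c \<in> carrier G" and "c [^] (m::int) = \<one>" and "[i = j] (mod m)"
  shows "c [^] i = c [^] j"
proof -
  have "int (ord c) dvd m" using assms(1,2) int_pow_eq_id by blast
  moreover have "m dvd j - i" using assms(3) by (simp add: cong_iff_dvd_diff dvd_diff_commute)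
  ultimately show ?thesis using assms(1) int_pow_eq dvd_trans by blast
qed

lemma conj_int_pow:
  assumes "x \<in> carrier G" and "c \<in> carrier G"
  shows "inv x \<otimes> c [^] (k::int) \<otimes> x = (inv x \<otimes> c \<otimes> x) [^] k"
proof -
  have "(\<lambda>g. inv x \<otimes> g \<otimes> x) \<in> hom G G"
    using assms by (auto intro!: homI simp: m_assoc m_inv_cancel_left)
  from hom_int_pow[OF this assms(2) is_group is_group] show ?thesis by simp
qed

lemma int_pow_commute_twisted:
  assumes x: "x \<in> carrier G" and c: "c \<in> carrier G" and c_m: "c [^] (m::int) = \<one>"
    and coprime: "coprime a m" and conj: "inv x \<otimes> c \<otimes> x = c [^] a"
  shows "c [^] (k::int) \<otimes> x [^] (n::int) = x [^] n \<otimes> c [^] (k * zpow_mod m a n)"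
proof (induction n rule: int_induct_iff)
  case 1
  show ?case using c by simp
next
  case (2 n)
  have shift: "c [^] j \<otimes> x = x \<otimes> c [^] (j * a)" for j :: int
  proof -
    have "inv x \<otimes> c [^] j \<otimes> x = c [^] (j * a)"
      using conj_int_pow[OF x c] conj c by (simp add: int_pow_pow mult.commute)
    then show ?thesis using x c by (simp add: m_assoc inv_solve_left')
  qed
  have "c [^] (k * zpow_mod m a (n + 1)) = c [^] (k * zpow_mod m a n * a)"
    using c c_m cong_scalar_left[OF zpow_mod_add1[OF coprime, of n], of k]
    by (intro int_pow_eq_if_cong) (simp_all add: ac_simps)
  then have "x [^] (n + 1) \<otimes> c [^] (k * zpow_mod m a (n + 1))
      = x [^] n \<otimes> (x \<otimes> c [^] (k * zpow_mod m a n * a))"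
    using x c by (simp add: int_pow_mult m_assoc)
  also have "\<dots> = x [^] n \<otimes> c [^] (k * zpow_mod m a n) \<otimes> x"
    using x c by (simp add: shift m_assoc)
  finally have rhs: "x [^] (n + 1) \<otimes> c [^] (k * zpow_mod m a (n + 1))
      = x [^] n \<otimes> c [^] (k * zpow_mod m a n) \<otimes> x" .
  have lhs: "c [^] k \<otimes> x [^] (n + 1) = c [^] k \<otimes> x [^] n \<otimes> x"
    using x c by (simp add: int_pow_mult m_assoc)
  show ?case
    unfolding lhs rhs by (rule right_cancel) (use x c in auto)
qed

lemma int_pow_commute_Ssum:
  assumes u: "u \<in> carrier G" and v: "v \<in> carrier G" and c: "c \<in> carrier G"
    and c_m: "c [^] (m::int) = \<one>" and coprime: "coprime a m" and conj: "inv v \<otimes> c \<otimes> v = c [^] a"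
    and vu: "v \<otimes> u = u \<otimes> v \<otimes> c [^] (e::int)"
  shows "v [^] (n::int) \<otimes> u = u \<otimes> v [^] n \<otimes> c [^] (e * Ssum m a n)"
proof (induction n rule: int_induct_iff)
  case 1
  show ?case using u c by simp
next
  case (2 n)
  have v_pow: "v [^] (n + 1) = v \<otimes> v [^] n"
    using int_pow_mult[OF v, of 1 n] v by (simp add: add.commute)
  have c_pow: "c [^] (e * Ssum m a (n + 1)) = c [^] (e * zpow_mod m a n) \<otimes> c [^] (e * Ssum m a n)"
    by (simp only: Ssum_add1 distrib_left add.commute[of "e * Ssum m a n"] int_pow_mult[OF c])
  have "u \<otimes> v [^] (n + 1) \<otimes> c [^] (e * Ssum m a (n + 1))
      = u \<otimes> v \<otimes> (v [^] n \<otimes> c [^] (e * zpow_mod m a n)) \<otimes> c [^] (e * Ssum m a n)"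
    using u v c by (simp add: v_pow c_pow m_assoc)
  also have "\<dots> = u \<otimes> v \<otimes> (c [^] e \<otimes> v [^] n) \<otimes> c [^] (e * Ssum m a n)"
    using int_pow_commute_twisted[OF v c c_m coprime conj, of e n] by simp
  also have "\<dots> = (u \<otimes> v \<otimes> c [^] e) \<otimes> (v [^] n \<otimes> c [^] (e * Ssum m a n))"
    using u v c by (simp add: m_assoc)
  also have "\<dots> = v \<otimes> (u \<otimes> v [^] n \<otimes> c [^] (e * Ssum m a n))"
    unfolding vu[symmetric] using u v c by (simp add: m_assoc)
  finally have rhs: "u \<otimes> v [^] (n + 1) \<otimes> c [^] (e * Ssum m a (n + 1))
      = v \<otimes> (u \<otimes> v [^] n \<otimes> c [^] (e * Ssum m a n))" .
  have lhs: "v [^] (n + 1) \<otimes> u = v \<otimes> (v [^] n \<otimes> u)"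
    using u v by (simp add: v_pow m_assoc)
  show ?case
    unfolding lhs rhs by (rule Units_l_cancel) (use u v c in auto)
qed

lemma group_center_generate:
  assumes gen: "carrier G = generate G S" and S: "S \<subseteq> carrier G" and z: "z \<in> carrier G"
  shows "z \<in> group_center G \<longleftrightarrow> (\<forall>s \<in> S. z \<otimes> s = s \<otimes> z)"
proof
  assume "z \<in> group_center G"
  then show "\<forall>s \<in> S. z \<otimes> s = s \<otimes> z"
    using S by (auto simp: group_center_def)
next
  assume commutes: "\<forall>s \<in> S. z \<otimes> s = s \<otimes> z"
  have "subgroup {g \<in> carrier G. z \<otimes> g = g \<otimes> z} G"
  proof (rule subgroupI)
    fix g
    assume g: "g \<in> {g \<in> carrier G. z \<otimes> g = g \<otimes> z}"
    then have g_carrier: "g \<in> carrier G" and gz: "g \<otimes> z = z \<otimes> g"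
      by auto
    have "g \<otimes> (z \<otimes> inv g) = (g \<otimes> z) \<otimes> inv g"
      using g_carrier z by (simp add: m_assoc)
    also have "\<dots> = z"
      unfolding gz using g_carrier z by (simp add: m_assoc)
    finally have "inv g \<otimes> z = z \<otimes> inv g"
      using inv_solve_left'[of "z \<otimes> inv g" g z] g_carrier z by simp
    then show "inv g \<in> {g \<in> carrier G. z \<otimes> g = g \<otimes> z}"
      using g_carrier by simp
  next
    fix g h
    assume "g \<in> {g \<in> carrier G. z \<otimes> g = g \<otimes> z}" and "h \<in> {g \<in> carrier G. z \<otimes> g = g \<otimes> z}"
    then show "g \<otimes> h \<in> {g \<in> carrier G. z \<otimes> g = g \<otimes> z}"
      using z by (simp add: m_assoc[symmetric]) (metis m_assoc)
  qed (use z in auto)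
  then have "generate G S \<subseteq> {g \<in> carrier G. z \<otimes> g = g \<otimes> z}"
    using commutes S by (intro generate_subgroup_incl) auto
  then show "z \<in> group_center G"
    using gen z by (auto simp: group_center_def)
qed

end

locale rels_group = group G for G (structure) +
  fixes x1 x2 :: 'a and m a1 a2 :: int
  assumes x1_closed [simp]: "x1 \<in> carrier G" and x2_closed [simp]: "x2 \<in> carrier G"
    and coprime_a1: "coprime a1 m" and coprime_a2: "coprime a2 m"
    and rels: "rels G m a1 a2 x1 x2"
begin

abbreviation c12 :: 'a where "c12 \<equiv> comm G x1 x2"

lemma c12_closed [simp]: "c12 \<in> carrier G"
  by (simp add: comm_def)

lemma c12_pow_m: "c12 [^] m = \<one>"
  using rels by (simp add: rels_def)

lemma conj_c12_x1: "inv x1 \<otimes> c12 \<otimes> x1 = c12 [^] a1"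
  using rels inv_solve_left'[of \<one> "conjg G c12 x1" "c12 [^] a1"] by (simp add: rels_def conjg_def)

lemma conj_c12_x2: "inv x2 \<otimes> c12 \<otimes> x2 = c12 [^] a2"
  using rels inv_solve_left'[of \<one> "conjg G c12 x2" "c12 [^] a2"] by (simp add: rels_def conjg_def)

lemma x1_x2: "x1 \<otimes> x2 = x2 \<otimes> x1 \<otimes> c12"
  by (simp add: comm_def m_assoc m_inv_cancel_left)

lemma x2_x1: "x2 \<otimes> x1 = x1 \<otimes> x2 \<otimes> c12 [^] (- 1 :: int)"
  by (simp add: x1_x2 int_pow_neg m_assoc)

lemma c12_pow_x1_pow: "c12 [^] (k::int) \<otimes> x1 [^] (n::int) = x1 [^] n \<otimes> c12 [^] (k * zpow_mod m a1 n)"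
  using int_pow_commute_twisted[OF x1_closed c12_closed c12_pow_m coprime_a1 conj_c12_x1] .

lemma c12_pow_x2_pow: "c12 [^] (k::int) \<otimes> x2 [^] (n::int) = x2 [^] n \<otimes> c12 [^] (k * zpow_mod m a2 n)"
  using int_pow_commute_twisted[OF x2_closed c12_closed c12_pow_m coprime_a2 conj_c12_x2] .

lemma x1_pow_x2: "x1 [^] (n::int) \<otimes> x2 = x2 \<otimes> x1 [^] n \<otimes> c12 [^] Ssum m a1 n"
  using int_pow_commute_Ssum[OF x2_closed x1_closed c12_closed c12_pow_m coprime_a1 conj_c12_x1, of 1]
  by (simp add: x1_x2)

lemma x2_pow_x1: "x2 [^] (n::int) \<otimes> x1 = x1 \<otimes> x2 [^] n \<otimes> c12 [^] (- Ssum m a2 n)"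
  using int_pow_commute_Ssum[OF x1_closed x2_closed c12_closed c12_pow_m coprime_a2 conj_c12_x2, of "-1"]
  by (simp add: x2_x1)

lemma commutes_x1_iff:
  fixes n1 n2 nc :: int
  shows "x1 [^] n1 \<otimes> x2 [^] n2 \<otimes> c12 [^] nc \<otimes> x1 = x1 \<otimes> (x1 [^] n1 \<otimes> x2 [^] n2 \<otimes> c12 [^] nc)
    \<longleftrightarrow> c12 [^] (nc * a1 - Ssum m a2 n2) = c12 [^] nc"
proof -
  have "x1 [^] n1 \<otimes> x2 [^] n2 \<otimes> c12 [^] nc \<otimes> x1 = x1 [^] n1 \<otimes> (x2 [^] n2 \<otimes> x1) \<otimes> c12 [^] (nc * a1)"
    using c12_pow_x1_pow[of nc 1] by (simp add: m_assoc)
  also have "\<dots> = x1 \<otimes> (x1 [^] n1 \<otimes> x2 [^] n2 \<otimes> c12 [^] (nc * a1 - Ssum m a2 n2))"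
    by (simp add: x2_pow_x1 m_assoc int_pow_left_commute_self int_pow_mult[symmetric])
  finally show ?thesis
    by (simp add: m_assoc)
qed

lemma commutes_x2_iff:
  fixes n1 n2 nc :: int
  shows "x1 [^] n1 \<otimes> x2 [^] n2 \<otimes> c12 [^] nc \<otimes> x2 = x2 \<otimes> (x1 [^] n1 \<otimes> x2 [^] n2 \<otimes> c12 [^] nc)
    \<longleftrightarrow> c12 [^] (Ssum m a1 n1 * zpow_mod m a2 n2 + nc * a2) = c12 [^] nc"
proof -
  have "x1 [^] n1 \<otimes> x2 [^] n2 \<otimes> c12 [^] nc \<otimes> x2 = (x1 [^] n1 \<otimes> x2) \<otimes> x2 [^] n2 \<otimes> c12 [^] (nc * a2)"
    using c12_pow_x2_pow[of nc 1] by (simp add: m_assoc int_pow_left_commute_self)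
  also have "\<dots> = x2 \<otimes> x1 [^] n1 \<otimes> (c12 [^] Ssum m a1 n1 \<otimes> x2 [^] n2) \<otimes> c12 [^] (nc * a2)"
    by (simp add: x1_pow_x2 m_assoc)
  also have "\<dots> = x2 \<otimes> (x1 [^] n1 \<otimes> x2 [^] n2 \<otimes> c12 [^] (Ssum m a1 n1 * zpow_mod m a2 n2 + nc * a2))"
    by (simp add: c12_pow_x2_pow m_assoc int_pow_mult)
  finally show ?thesis
    by (simp add: m_assoc)
qed

lemma center_iff:
  fixes n1 n2 nc :: int
  assumes gen: "carrier G = generate G {x1, x2}"
    and c12_pow_eq_iff: "\<And>i j :: int. c12 [^] i = c12 [^] j \<longleftrightarrow> [i = j] (mod m)"
  shows "x1 [^] n1 \<otimes> x2 [^] n2 \<otimes> c12 [^] nc \<in> group_center G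
    \<longleftrightarrow> [nc * (a1 - 1) = Ssum m a2 n2] (mod m) \<and> [nc * (a2 - 1) = Ssum m a1 (- n1)] (mod m)"
proof -
  let ?z = "x1 [^] n1 \<otimes> x2 [^] n2 \<otimes> c12 [^] nc"
  have "?z \<in> group_center G \<longleftrightarrow> ?z \<otimes> x1 = x1 \<otimes> ?z \<and> ?z \<otimes> x2 = x2 \<otimes> ?z"
    using group_center_generate[OF gen] by simp
  also have "\<dots> \<longleftrightarrow> [nc * a1 - Ssum m a2 n2 = nc] (mod m)
      \<and> [Ssum m a1 n1 * zpow_mod m a2 n2 + nc * a2 = nc] (mod m)"
    by (simp add: commutes_x1_iff commutes_x2_iff c12_pow_eq_iff)
  also have "\<dots> \<longleftrightarrow> [nc * (a1 - 1) = Ssum m a2 n2] (mod m) \<and> [nc * (a2 - 1) = Ssum m a1 (- n1)] (mod m)"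
    by (rule center_congruences_iff[OF coprime_a1 coprime_a2])
  finally show ?thesis .
qed

end

section \<open>A normal-form model in which the commutator has order m\<close>

(* The universal property in presentation only quantifies over groups with carrier in int, so
   models must be copied onto int along an injection. *)
definition transport_monoid :: "('a \<Rightarrow> 'c) \<Rightarrow> ('a, 'b) monoid_scheme \<Rightarrow> 'c monoid" where
  "transport_monoid f G = \<lparr>carrier = f ` carrier G,
     monoid.mult = (\<lambda>x y. f (the_inv f x \<otimes>\<^bsub>G\<^esub> the_inv f y)), one = f \<one>\<^bsub>G\<^esub>\<rparr>"

lemma (in group) transport_monoid_hom: "inj f \<Longrightarrow> f \<in> hom G (transport_monoid f G)"
  by (auto intro!: homI simp: transport_monoid_def the_inv_f_f)

lemma (in group) group_transport_monoid:
  assumes "inj f"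
  shows "group (transport_monoid f G)"
proof (rule groupI)
  fix x
  assume "x \<in> carrier (transport_monoid f G)"
  then obtain g where "g \<in> carrier G" and "x = f g"
    by (auto simp: transport_monoid_def)
  then show "\<exists>y \<in> carrier (transport_monoid f G). y \<otimes>\<^bsub>transport_monoid f G\<^esub> x = \<one>\<^bsub>transport_monoid f G\<^esub>"
    using assms by (intro bexI[of _ "f (inv g)"]) (auto simp: transport_monoid_def the_inv_f_f)
qed (use assms in \<open>auto simp: transport_monoid_def the_inv_f_f m_assoc\<close>)

lemma (in group_hom) hom_comm:
  "x \<in> carrier G \<Longrightarrow> y \<in> carrier G \<Longrightarrow> h (comm G x y) = comm H (h x) (h y)"
  by (simp add: comm_def)

lemma (in group_hom) hom_rels:
  assumes x: "x \<in> carrier G" and y: "y \<in> carrier G" and rels: "rels G m a1 a2 x y"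
  shows "rels H m a1 a2 (h x) (h y)"
proof -
  have c: "comm G x y \<in> carrier G" and hc: "h (comm G x y) = comm H (h x) (h y)"
    using x y by (simp_all add: comm_def)
  have pow: "h (comm G x y [^]\<^bsub>G\<^esub> (e::int)) = comm H (h x) (h y) [^]\<^bsub>H\<^esub> e" for e
    using c by (simp add: hc hom_int_pow)
  have conj: "h (inv\<^bsub>G\<^esub> (conjg G (comm G x y) g) \<otimes>\<^bsub>G\<^esub> comm G x y [^]\<^bsub>G\<^esub> (e::int))
      = inv\<^bsub>H\<^esub> (conjg H (comm H (h x) (h y)) (h g)) \<otimes>\<^bsub>H\<^esub> comm H (h x) (h y) [^]\<^bsub>H\<^esub> e"
    if "g \<in> carrier G" for g e
    using that c by (simp add: conjg_def hc hom_int_pow)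
  show ?thesis
    using rels pow[of m] conj[OF x, of a1] conj[OF y, of a2] by (simp add: rels_def)
qed

(* (p, n, k) stands for x1^p x2^n c^k.  The product is the normal form of
   x1^p x2^n c^k x1^q x2^n' c^k', computed from c^k x1^q = x1^q c^(k a1^q),
   x2^n x1^q = x1^q x2^n c^(-S_n(a2) S_q(a1)) and c^j x2^n' = x2^n' c^(j a2^n'). *)
fun nf_mult :: "int \<Rightarrow> int \<Rightarrow> int \<Rightarrow> int \<times> int \<times> int \<Rightarrow> int \<times> int \<times> int \<Rightarrow> int \<times> int \<times> int" where
  "nf_mult m a1 a2 (p, n, k) (q, n', k') = (p + q, n + n',
     ((zpow_mod m a1 q * k - Ssum m a2 n * Ssum m a1 q) * zpow_mod m a2 n' + k') mod m)"

definition nf_group :: "int \<Rightarrow> int \<Rightarrow> int \<Rightarrow> (int \<times> int \<times> int) monoid" where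
  "nf_group m a1 a2 = \<lparr>carrier = UNIV \<times> UNIV \<times> {0..<m}, monoid.mult = nf_mult m a1 a2, one = (0, 0, 0)\<rparr>"

lemma nf_group_carrier_iff [simp]: "(p, n, k) \<in> carrier (nf_group m a1 a2) \<longleftrightarrow> 0 \<le> k \<and> k < m"
  by (simp add: nf_group_def)

lemma nf_group_mult [simp]: "x \<otimes>\<^bsub>nf_group m a1 a2\<^esub> y = nf_mult m a1 a2 x y"
  by (simp add: nf_group_def)

lemma nf_group_one [simp]: "\<one>\<^bsub>nf_group m a1 a2\<^esub> = (0, 0, 0)"
  by (simp add: nf_group_def)

lemma nf_mult_assoc:
  assumes coprime1: "coprime a1 m" and coprime2: "coprime a2 m"
  shows "nf_mult m a1 a2 (nf_mult m a1 a2 (p, n, k) (q, n', k')) (r, n'', k'')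
       = nf_mult m a1 a2 (p, n, k) (nf_mult m a1 a2 (q, n', k') (r, n'', k''))"
proof -
  define P1 P2 S1 S2 where "P1 = zpow_mod m a1" and "P2 = zpow_mod m a2"
    and "S1 = Ssum m a1" and "S2 = Ssum m a2"
  define K1 K2 where "K1 = (P1 q * k - S2 n * S1 q) * P2 n' + k'"
    and "K2 = (P1 r * k' - S2 n' * S1 r) * P2 n'' + k''"
  define U1 U2 where "U1 = (P1 r * K1 - S2 (n + n') * S1 r) * P2 n'' + k''"
    and "U2 = (P1 (q + r) * k - S2 n * S1 (q + r)) * P2 (n' + n'') + K2"
  define D1 D2 D3 D4 where "D1 = P1 (q + r) - P1 q * P1 r" and "D2 = P2 (n' + n'') - P2 n' * P2 n''"
    and "D3 = S1 (q + r) - (S1 r + P1 r * S1 q)" and "D4 = S2 (n + n') - (S2 n' + P2 n' * S2 n)"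
  have "[(P1 r * (K1 mod m) - S2 (n + n') * S1 r) * P2 n'' + k'' = U1] (mod m)"
    unfolding U1_def by (intro cong_add cong_mult cong_diff cong_refl) (simp add: cong_def)
  moreover have "[U1 = U2] (mod m)"
  proof -
    have "m dvd D1" "m dvd D2" "m dvd D3" "m dvd D4"
      using zpow_mod_add[OF coprime1, of q r] zpow_mod_add[OF coprime2, of n' n'']
        Ssum_add[OF coprime1, of r q] Ssum_add[OF coprime2, of n' n]
      by (simp_all add: D1_def D2_def D3_def D4_def P1_def P2_def S1_def S2_def cong_iff_dvd_diff add.commute)
    moreover have "U1 - U2 = D1 * (- k * P2 (n' + n''))
        + D2 * (S2 n * (S1 r + P1 r * S1 q) - k * P1 q * P1 r)
        + D3 * (S2 n * P2 (n' + n'')) + D4 * (- S1 r * P2 n'')"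
      unfolding U1_def U2_def K1_def K2_def D1_def D2_def D3_def D4_def by (simp add: algebra_simps)
    ultimately show ?thesis
      by (simp add: cong_iff_dvd_diff)
  qed
  moreover have "[U2 = (P1 (q + r) * k - S2 n * S1 (q + r)) * P2 (n' + n'') + K2 mod m] (mod m)"
    unfolding U2_def by (intro cong_add cong_refl) (simp add: cong_def)
  ultimately have "[(P1 r * (K1 mod m) - S2 (n + n') * S1 r) * P2 n'' + k''
      = (P1 (q + r) * k - S2 n * S1 (q + r)) * P2 (n' + n'') + K2 mod m] (mod m)"
    by (metis cong_trans)
  then show ?thesis
    unfolding P1_def P2_def S1_def S2_def K1_def K2_def by (simp add: cong_def add.assoc)
qed

lemma nf_mult_left_inverse:
  fixes q n k :: int
  assumes coprime1: "coprime a1 m" and coprime2: "coprime a2 m"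
  defines "k\<^sub>i \<equiv> zpow_mod m a1 (- q) * (Ssum m a2 (- n) * Ssum m a1 q - k * zpow_mod m a2 (- n))"
  shows "nf_mult m a1 a2 (- q, - n, k\<^sub>i mod m) (q, n, k) = (0, 0, 0)"
proof -
  have "m dvd 1 - zpow_mod m a1 q * zpow_mod m a1 (- q)" "m dvd 1 - zpow_mod m a2 (- n) * zpow_mod m a2 n"
    using zpow_mod_add[OF coprime1, of q "- q"] zpow_mod_add[OF coprime2, of "- n" n]
    by (simp_all add: cong_iff_dvd_diff)
  moreover have "(zpow_mod m a1 q * k\<^sub>i - Ssum m a2 (- n) * Ssum m a1 q) * zpow_mod m a2 n + k
      = (1 - zpow_mod m a1 q * zpow_mod m a1 (- q))
          * (- (Ssum m a2 (- n) * Ssum m a1 q - k * zpow_mod m a2 (- n)) * zpow_mod m a2 n)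
        + k * (1 - zpow_mod m a2 (- n) * zpow_mod m a2 n)"
    unfolding k\<^sub>i_def by (simp add: algebra_simps)
  ultimately have "[(zpow_mod m a1 q * k\<^sub>i - Ssum m a2 (- n) * Ssum m a1 q) * zpow_mod m a2 n + k = 0] (mod m)"
    by (simp add: cong_0_iff)
  moreover have "[(zpow_mod m a1 q * (k\<^sub>i mod m) - Ssum m a2 (- n) * Ssum m a1 q) * zpow_mod m a2 n + k
      = (zpow_mod m a1 q * k\<^sub>i - Ssum m a2 (- n) * Ssum m a1 q) * zpow_mod m a2 n + k] (mod m)"
    by (intro cong_add cong_mult cong_diff cong_refl) (simp add: cong_def)
  ultimately show ?thesis
    by (simp add: cong_def)
qed

lemma group_nf_group:
  assumes "m > 0" and coprime1: "coprime a1 m" and coprime2: "coprime a2 m"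
  shows "group (nf_group m a1 a2)"
proof (rule groupI)
  fix x
  assume "x \<in> carrier (nf_group m a1 a2)"
  obtain q n k where x: "x = (q, n, k)"
    by (cases x)
  let ?k = "zpow_mod m a1 (- q) * (Ssum m a2 (- n) * Ssum m a1 q - k * zpow_mod m a2 (- n))"
  have "(- q, - n, ?k mod m) \<otimes>\<^bsub>nf_group m a1 a2\<^esub> x = \<one>\<^bsub>nf_group m a1 a2\<^esub>"
    using nf_mult_left_inverse[OF coprime1 coprime2] by (simp add: x)
  moreover have "(- q, - n, ?k mod m) \<in> carrier (nf_group m a1 a2)"
    using \<open>m > 0\<close> by simp
  ultimately show "\<exists>y \<in> carrier (nf_group m a1 a2). y \<otimes>\<^bsub>nf_group m a1 a2\<^esub> x = \<one>\<^bsub>nf_group m a1 a2\<^esub>"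
    by blast
next
  fix x y z
  assume "x \<in> carrier (nf_group m a1 a2)" "y \<in> carrier (nf_group m a1 a2)" "z \<in> carrier (nf_group m a1 a2)"
  then show "x \<otimes>\<^bsub>nf_group m a1 a2\<^esub> y \<otimes>\<^bsub>nf_group m a1 a2\<^esub> z
      = x \<otimes>\<^bsub>nf_group m a1 a2\<^esub> (y \<otimes>\<^bsub>nf_group m a1 a2\<^esub> z)"
    using nf_mult_assoc[OF coprime1 coprime2]
    by (cases x, cases y, cases z) (simp del: nf_mult.simps)
qed (use assms in \<open>auto simp: nf_group_def\<close>)

context
  fixes m a1 a2 :: int
  assumes m: "m \<ge> 2" and coprime1: "coprime a1 m" and coprime2: "coprime a2 m"
begin

interpretation nf: group "nf_group m a1 a2"
  using m coprime1 coprime2 by (intro group_nf_group) auto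

lemma nf_inv_x1: "inv\<^bsub>nf_group m a1 a2\<^esub> (1, 0, 0) = (- 1, 0, 0)"
  using m by (intro nf.inv_equality) auto

lemma nf_inv_x2: "inv\<^bsub>nf_group m a1 a2\<^esub> (0, 1, 0) = (0, - 1, 0)"
  using m by (intro nf.inv_equality) auto

lemma nf_comm: "comm (nf_group m a1 a2) (1, 0, 0) (0, 1, 0) = (0, 0, 1)"
proof -
  have "(modular_inverse m a2 mod m * a2) mod m = 1"
    using cong_modular_inverse2[OF coprime2] m by (simp add: cong_def mod_simps)
  then show ?thesis
    by (simp add: comm_def nf_inv_x1 nf_inv_x2)
qed

lemma nf_c12_pow: "(0, 0, 1) [^]\<^bsub>nf_group m a1 a2\<^esub> (k::int) = (0, 0, k mod m)"
proof -
  have nat_pow: "(0, 0, 1) [^]\<^bsub>nf_group m a1 a2\<^esub> (j::nat) = (0, 0, int j mod m)" for j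
    by (induction j) (simp_all add: mod_simps add.commute)
  show ?thesis
  proof (cases "k < 0")
    case True
    have "inv\<^bsub>nf_group m a1 a2\<^esub> (0, 0, - k mod m) = (0, 0, k mod m)"
      using m by (intro nf.inv_equality) (auto simp: mod_simps)
    with True show ?thesis
      by (simp add: int_pow_def2 nat_pow)
  qed (simp add: int_pow_def2 nat_pow)
qed

lemma nf_rels: "rels (nf_group m a1 a2) m a1 a2 (1, 0, 0) (0, 1, 0)"
proof -
  have "conjg (nf_group m a1 a2) (0, 0, 1) (1, 0, 0) = (0, 0, 1) [^]\<^bsub>nf_group m a1 a2\<^esub> a1"
    "conjg (nf_group m a1 a2) (0, 0, 1) (0, 1, 0) = (0, 0, 1) [^]\<^bsub>nf_group m a1 a2\<^esub> a2"
    using m by (simp_all add: conjg_def nf_inv_x1 nf_inv_x2 nf_c12_pow)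
  moreover have "(0, 0, 1) \<in> carrier (nf_group m a1 a2)"
    using m by simp
  ultimately show ?thesis
    by (simp add: rels_def nf_comm nf_c12_pow del: nf_group_mult)
qed

end

lemma presentation_c12_pow_image:
  assumes m: "m \<ge> 2" and coprime1: "coprime a1 m" and coprime2: "coprime a2 m"
    and pres: "presentation G m a1 a2 x1 x2"
  obtains \<psi> :: "'a \<Rightarrow> int \<times> int \<times> int"
  where "\<And>k::int. \<psi> (comm G x1 x2 [^]\<^bsub>G\<^esub> k) = (0, 0, k mod m)"
proof -
  define enc :: "int \<times> int \<times> int \<Rightarrow> int" where "enc t = int (to_nat t)" for t
  define H where "H = transport_monoid enc (nf_group m a1 a2)"
  interpret T: group "nf_group m a1 a2"
    using m coprime1 coprime2 by (intro group_nf_group) auto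
  have "inj enc"
    by (simp add: enc_def inj_on_def)
  then interpret T_H: group_hom "nf_group m a1 a2" H enc
    unfolding H_def by (intro group_hom.intro group_hom_axioms.intro T.group_transport_monoid
      T.transport_monoid_hom T.is_group)
  have y: "(1, 0, 0) \<in> carrier (nf_group m a1 a2)" "(0, 1, 0) \<in> carrier (nf_group m a1 a2)"
    using m by auto
  then have "rels H m a1 a2 (enc (1, 0, 0)) (enc (0, 1, 0))"
    by (intro T_H.hom_rels nf_rels[OF m coprime1 coprime2])
  moreover have "enc (1, 0, 0) \<in> carrier H" "enc (0, 1, 0) \<in> carrier H"
    using y by simp_all
  ultimately obtain \<phi> where \<phi>: "\<phi> \<in> hom G H" "\<phi> x1 = enc (1, 0, 0)" "\<phi> x2 = enc (0, 1, 0)"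
    using pres T_H.H.is_group unfolding presentation_def by blast
  have "group G" and x: "x1 \<in> carrier G" "x2 \<in> carrier G"
    using pres unfolding presentation_def by blast+
  then interpret G_H: group_hom G H \<phi>
    using \<phi>(1) T_H.H.is_group by (intro group_hom.intro group_hom_axioms.intro)
  have "\<phi> (comm G x1 x2) = enc (0, 0, 1)"
    using x y by (simp add: G_H.hom_comm \<phi>(2,3) nf_comm[OF m coprime1 coprime2] flip: T_H.hom_comm)
  then have "\<phi> (comm G x1 x2 [^]\<^bsub>G\<^esub> k) = enc (0, 0, k mod m)" for k :: int
    using m x by (simp add: comm_def G_H.hom_int_pow nf_c12_pow[OF m coprime1 coprime2] flip: T_H.hom_int_pow)
  then show ?thesis
    using \<open>inj enc\<close> by (intro that[of "the_inv enc \<circ> \<phi>"]) (simp add: the_inv_f_f)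
qed

lemma presentation_comm_pow_eq_iff:
  assumes m: "m \<ge> 2" and coprime1: "coprime a1 m" and coprime2: "coprime a2 m"
    and pres: "presentation G m a1 a2 x1 x2"
  shows "comm G x1 x2 [^]\<^bsub>G\<^esub> (i::int) = comm G x1 x2 [^]\<^bsub>G\<^esub> (j::int) \<longleftrightarrow> [i = j] (mod m)"
proof
  obtain \<psi> :: "'a \<Rightarrow> int \<times> int \<times> int" where "\<And>k::int. \<psi> (comm G x1 x2 [^]\<^bsub>G\<^esub> k) = (0, 0, k mod m)"
    using presentation_c12_pow_image[OF assms] by blast
  then show "comm G x1 x2 [^]\<^bsub>G\<^esub> i = comm G x1 x2 [^]\<^bsub>G\<^esub> j \<Longrightarrow> [i = j] (mod m)"
    by (metis cong_def prod.inject)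
next
  interpret rels_group G x1 x2 m a1 a2
    using pres coprime1 coprime2 unfolding presentation_def
    by (intro rels_group.intro rels_group_axioms.intro) auto
  show "[i = j] (mod m) \<Longrightarrow> comm G x1 x2 [^]\<^bsub>G\<^esub> i = comm G x1 x2 [^]\<^bsub>G\<^esub> j"
    by (rule int_pow_eq_if_cong[OF c12_closed c12_pow_m])
qed

theorem proposition14:
  fixes G :: "('a, 'b) monoid_scheme" and x1 x2 :: 'a
    and m a1 a2 n1 n2 nc :: int
  assumes "m \<ge> 2" and "coprime a1 m" and "coprime a2 m"
    and "presentation G m a1 a2 x1 x2"
  shows "(x1 [^]\<^bsub>G\<^esub> n1 \<otimes>\<^bsub>G\<^esub> x2 [^]\<^bsub>G\<^esub> n2
            \<otimes>\<^bsub>G\<^esub> comm G x1 x2 [^]\<^bsub>G\<^esub> nc \<in> group_center G)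
     \<longleftrightarrow> ([nc * (a1 - 1) = Ssum m a2 n2] (mod m) \<and>
          [nc * (a2 - 1) = Ssum m a1 (- n1)] (mod m))"
proof -
  have gen: "carrier G = generate G {x1, x2}"
    using assms(4) by (simp add: presentation_def)
  interpret rels_group G x1 x2 m a1 a2
    using assms(2-4) unfolding presentation_def by (intro rels_group.intro rels_group_axioms.intro) auto
  show ?thesis
    by (rule center_iff[OF gen presentation_comm_pow_eq_iff[OF assms]])
qed

end
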